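(* Let $a\ge0$, let $f\colon[a,\infty)\to(0,\infty)$ be smooth, let $x$ be $C^1$, and let $(M,g,K)$ be the initial data set $M=[a,\infty)\times\mathbb S^2$, $g=ds^2+f(s)^2\gamma_*$, $K=x'(f(s))ds^2+x(f(s))f(s)\gamma_*$, with energy density satisfying $\mu\ge\tau$ for some $\tau\in\mathbb R$. Then for any $s_o>a$ with $f'(s_o)>0$ there exist $\delta>0$ and a smooth positive function $\widetilde f$ on $[s_o-\delta,\infty)$ with $\widetilde f=f$ on $[s_o,\infty)$ such that the initial data set $\widetilde M=[s_o-\delta,\infty)\times\mathbb S^2$, $\widetilde g=ds^2+\widetilde f^2\gamma_*$, $\widetilde K=x'(\widetilde f)ds^2+x(\widetilde f)\widetilde f\gamma_*$ has energy density $\widetilde\mu\ge\tau$ everywhere and $\widetilde\mu>\tau$ on $[s_o-\delta,s_o)$. Moreover, if in addition $f(s_o)>c>0$ and $f''(s_o)>0$, then $\delta$ can be chosen such that $\widetilde f(s_o-\delta)>c$ and $\widetilde f'(s_o-\delta)<f'(s_o)$.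
   Context: $\gamma_*$ is the standard round metric on $\mathbb S^2$; energy density $\mu=\tfrac12(R(g)+(\operatorname{tr}_gK)^2-|K|^2_g)$. *)

theory Defs
  imports "HOL-Analysis.Analysis"
begin

text \<open>A real function f is smooth on the closed ray [a,\<infinity>) with derivative tower D:
  D 0 = f on the ray and each D k has (one-sided at the endpoint) derivative D (Suc k)
  at every point of the ray. Thus D 1 = f', D 2 = f''.\<close>
definition smooth_ray :: "real \<Rightarrow> (real \<Rightarrow> real) \<Rightarrow> (nat \<Rightarrow> real \<Rightarrow> real) \<Rightarrow> bool" where
  "smooth_ray a f D \<longleftrightarrow> (\<forall>t\<ge>a. D 0 t = f t) \<and>
     (\<forall>k. \<forall>t\<ge>a. (D k has_real_derivative D (Suc k) t) (at t within {a..}))"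

definition C1_pos :: "(real \<Rightarrow> real) \<Rightarrow> (real \<Rightarrow> real) \<Rightarrow> bool" where
  "C1_pos x x' \<longleftrightarrow> (\<forall>y>0. (x has_real_derivative x' y) (at y)) \<and> continuous_on {0<..} x'"

text \<open>Scalar curvature of g = ds^2 + f(s)^2 \<gamma>_* on I \<times> S^2 (round unit S^2), at s,
  where f1 = f', f2 = f''.\<close>
definition warped_scalar :: "real \<Rightarrow> real \<Rightarrow> real \<Rightarrow> real" where
  "warped_scalar fs f1s f2s = 2 * (1 - f1s^2) / fs^2 - 4 * f2s / fs"

text \<open>For K = x'(f) ds^2 + x(f) f \<gamma>_*: in a g-orthonormal frame K = diag(x'(f), x(f)/f, x(f)/f).\<close>
definition trK :: "(real \<Rightarrow> real) \<Rightarrow> (real \<Rightarrow> real) \<Rightarrow> real \<Rightarrow> real" where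
  "trK x x' fs = x' fs + 2 * x fs / fs"

definition normK_sq :: "(real \<Rightarrow> real) \<Rightarrow> (real \<Rightarrow> real) \<Rightarrow> real \<Rightarrow> real" where
  "normK_sq x x' fs = (x' fs)^2 + 2 * (x fs / fs)^2"

definition energy_density ::
  "(real \<Rightarrow> real) \<Rightarrow> (real \<Rightarrow> real) \<Rightarrow> (nat \<Rightarrow> real \<Rightarrow> real) \<Rightarrow> real \<Rightarrow> real" where
  "energy_density x x' D s =
     (warped_scalar (D 0 s) (D 1 s) (D 2 s) + (trK x x' (D 0 s))^2 - normK_sq x x' (D 0 s)) / 2"

end

theory Submission
  imports Defs
begin

(*
  Reparametrise f near so by sigma(s) = s - exp(-1/(so - s)) for s < so and sigma(s) = s for s >= so,
  and put ft = f o sigma. Since sigma - id is flat at so, ft is smooth and agrees with f on [so, oo).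
  The energy density only sees the 2-jet of ft. Its value and hence tr K and |K|^2 are those of f at
  sigma(s), while ft'' = f''(sigma) sigma'^2 + f'(sigma) sigma'' acquires the term
  sigma'' ~ -exp(-1/u)/u^4 (u = so - s), which dominates every other correction. Hence
  mu~(s) = mu(sigma s) + exp(-1/u)/u^4 * B(s) with B continuous and B(so) = 2 f'(so)/f(so) > 0,
  so mu~ > mu(sigma s) >= tau just left of so. Smoothness of f o sigma needs no Faa di Bruno
  formula: the algebra generated by the f^(k) o sigma and the functions exp(-1/u)/u^n is closed
  under differentiation.
*)

definition deriv_tower :: "real set \<Rightarrow> (nat \<Rightarrow> real \<Rightarrow> real) \<Rightarrow> bool" where
  "deriv_tower S D \<longleftrightarrow> (\<forall>k. \<forall>t\<in>S. (D k has_real_derivative D (Suc k) t) (at t within S))"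

definition smooth_within :: "real set \<Rightarrow> (real \<Rightarrow> real) \<Rightarrow> bool" where
  "smooth_within S h \<longleftrightarrow> (\<exists>D. D 0 = h \<and> deriv_tower S D)"

lemma smooth_ray_iff_deriv_tower:
  "smooth_ray a f D \<longleftrightarrow> (\<forall>t\<ge>a. D 0 t = f t) \<and> deriv_tower {a..} D"
  by (auto simp: smooth_ray_def deriv_tower_def)

lemma deriv_tower_subset:
  "deriv_tower S D \<Longrightarrow> T \<subseteq> S \<Longrightarrow> deriv_tower T D"
  unfolding deriv_tower_def by (blast intro: has_field_derivative_subset)

lemma deriv_tower_case_nat:
  assumes "deriv_tower S D" and "\<forall>t\<in>S. (h has_real_derivative D 0 t) (at t within S)"
  shows "deriv_tower S (case_nat h D)"
  using assms unfolding deriv_tower_def by (auto split: nat.split)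

lemma smooth_within_of_deriv_closed:
  assumes closed: "\<forall>g\<in>P. \<exists>g'\<in>P. \<forall>t\<in>S. (g has_real_derivative g' t) (at t within S)"
    and "h \<in> P"
  shows "smooth_within S h"
proof -
  obtain next_deriv where next_deriv:
    "\<And>g. g \<in> P \<Longrightarrow> next_deriv g \<in> P \<and> (\<forall>t\<in>S. (g has_real_derivative next_deriv g t) (at t within S))"
    using closed by metis
  define D where "D k = (next_deriv ^^ k) h" for k
  have "D k \<in> P" for k
    by (induction k) (auto simp: D_def \<open>h \<in> P\<close> next_deriv)
  then have "deriv_tower S D"
    by (auto simp: deriv_tower_def D_def next_deriv)
  then show ?thesis
    unfolding smooth_within_def by (intro exI[of _ D]) (simp add: D_def)
qed

inductive_set alg_gen :: "(real \<Rightarrow> real) set \<Rightarrow> (real \<Rightarrow> real) set" for B where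
  base: "b \<in> B \<Longrightarrow> b \<in> alg_gen B"
| const: "(\<lambda>t. c) \<in> alg_gen B"
| add: "f \<in> alg_gen B \<Longrightarrow> g \<in> alg_gen B \<Longrightarrow> (\<lambda>t. f t + g t) \<in> alg_gen B"
| diff: "f \<in> alg_gen B \<Longrightarrow> g \<in> alg_gen B \<Longrightarrow> (\<lambda>t. f t - g t) \<in> alg_gen B"
| mult: "f \<in> alg_gen B \<Longrightarrow> g \<in> alg_gen B \<Longrightarrow> (\<lambda>t. f t * g t) \<in> alg_gen B"

lemma alg_gen_deriv_closed:
  assumes "\<forall>b\<in>B. \<exists>b'\<in>alg_gen B. \<forall>t\<in>S. (b has_real_derivative b' t) (at t within S)"
    and "g \<in> alg_gen B"
  shows "\<exists>g'\<in>alg_gen B. \<forall>t\<in>S. (g has_real_derivative g' t) (at t within S)"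
  using assms(2)
proof induction
  case (base b)
  then show ?case using assms(1) by blast
next
  case (const c)
  show ?case by (rule bexI[OF _ alg_gen.const[of 0]]) auto
next
  case (add f g)
  then obtain f' g' where "f' \<in> alg_gen B" "g' \<in> alg_gen B"
    and "\<forall>t\<in>S. (f has_real_derivative f' t) (at t within S)"
    and "\<forall>t\<in>S. (g has_real_derivative g' t) (at t within S)" by blast
  then show ?case
    by (intro bexI[of _ "\<lambda>t. f' t + g' t"]) (auto intro: DERIV_add alg_gen.add)
next
  case (diff f g)
  then obtain f' g' where "f' \<in> alg_gen B" "g' \<in> alg_gen B"
    and "\<forall>t\<in>S. (f has_real_derivative f' t) (at t within S)"
    and "\<forall>t\<in>S. (g has_real_derivative g' t) (at t within S)" by blast
  then show ?case
    by (intro bexI[of _ "\<lambda>t. f' t - g' t"]) (auto intro: DERIV_diff alg_gen.diff)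
next
  case (mult f g)
  then obtain f' g' where "f' \<in> alg_gen B" "g' \<in> alg_gen B"
    and "\<forall>t\<in>S. (f has_real_derivative f' t) (at t within S)"
    and "\<forall>t\<in>S. (g has_real_derivative g' t) (at t within S)" by blast
  with mult.hyps show ?case
    by (intro bexI[of _ "\<lambda>t. f t * g' t + f' t * g t"]) (auto intro: DERIV_mult' alg_gen.add alg_gen.mult)
qed

lemma smooth_within_alg_gen:
  assumes "\<forall>b\<in>B. \<exists>b'\<in>alg_gen B. \<forall>t\<in>S. (b has_real_derivative b' t) (at t within S)"
    and "g \<in> alg_gen B"
  shows "smooth_within S g"
  using smooth_within_of_deriv_closed alg_gen_deriv_closed[OF assms(1)] assms(2) by blast

definition flat :: "real \<Rightarrow> nat \<Rightarrow> real \<Rightarrow> real" where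
  "flat c n s = (if s < c then exp (- 1 / (c - s)) / (c - s) ^ n else 0)"

lemma flat_pos: "s < c \<Longrightarrow> flat c n s > 0"
  by (simp add: flat_def)

lemma flat_eq_0: "c \<le> s \<Longrightarrow> flat c n s = 0"
  by (simp add: flat_def)

lemma flat_mult_power: "s < c \<Longrightarrow> flat c n s = flat c (n + k) s * (c - s) ^ k"
  by (simp add: flat_def power_add)

lemma exp_neg_inverse_le: "(u::real) > 0 \<Longrightarrow> exp (- 1 / u) \<le> u"
proof -
  assume "u > 0"
  have "1 / u < exp (1 / u)" using exp_ge_add_one_self[of "1 / u"] by linarith
  then have "inverse (exp (1 / u)) \<le> inverse (1 / u)" using \<open>u > 0\<close> by (intro le_imp_inverse_le) auto
  then show ?thesis by (simp add: exp_minus)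
qed

lemma eventually_less_at_left: "\<forall>\<^sub>F s in at_left c. s < (c::real)"
  by (simp add: eventually_at_filter)

lemma flat_0_le: "s < c \<Longrightarrow> flat c 0 s \<le> c - s"
  using exp_neg_inverse_le[of "c - s"] by (simp add: flat_def)

lemma tendsto_exp_neg_inverse_div_power:
  "((\<lambda>u::real. exp (- 1 / u) / u ^ m) \<longlongrightarrow> 0) (at_right 0)"
proof -
  have "((\<lambda>u. inverse u ^ m / exp (inverse u)) \<longlongrightarrow> (0::real)) (at_right 0)"
    by (rule filterlim_compose[OF tendsto_power_div_exp_0 filterlim_inverse_at_top_right])
  moreover have "inverse u ^ m / exp (inverse u) = exp (- 1 / u) / u ^ m" for u :: real
    by (metis divide_inverse_commute exp_minus inverse_eq_divide minus_divide_left mult.commute power_inverse)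
  ultimately show ?thesis by simp
qed

lemma flat_tendsto_at_left: "(flat c n \<longlongrightarrow> 0) (at_left c)"
proof -
  have "filterlim (\<lambda>s. c - s) (at_right 0) (at_left c)"
    unfolding filterlim_at
    by (auto intro!: tendsto_eq_intros eventually_mono[OF eventually_less_at_left])
  from filterlim_compose[OF tendsto_exp_neg_inverse_div_power this]
  have "((\<lambda>s. exp (- 1 / (c - s)) / (c - s) ^ n) \<longlongrightarrow> 0) (at_left c)" .
  moreover have "\<forall>\<^sub>F s in at_left c. exp (- 1 / (c - s)) / (c - s) ^ n = flat c n s"
    using eventually_less_at_left by (rule eventually_mono) (simp add: flat_def)
  ultimately show ?thesis by (rule Lim_transform_eventually)
qed

lemma has_real_derivative_flat_at_center: "(flat c n has_real_derivative 0) (at c)"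
proof -
  have "\<forall>\<^sub>F s in at_left c. - flat c (Suc n) s = (flat c n s - flat c n c) / (s - c)"
    using eventually_less_at_left
    by (rule eventually_mono) (simp add: flat_def divide_simps algebra_simps)
  with tendsto_minus[OF flat_tendsto_at_left]
  have "((\<lambda>s. (flat c n s - flat c n c) / (s - c)) \<longlongrightarrow> 0) (at_left c)"
    by (auto intro: Lim_transform_eventually)
  moreover have "\<forall>\<^sub>F s in at_right c. 0 = (flat c n s - flat c n c) / (s - c)"
    using eventually_at_right_less by (rule eventually_mono) (simp add: flat_eq_0)
  then have "((\<lambda>s. (flat c n s - flat c n c) / (s - c)) \<longlongrightarrow> 0) (at_right c)"
    by (rule Lim_transform_eventually[OF tendsto_const])
  ultimately show ?thesis
    unfolding has_field_derivative_iff filterlim_at_split by simp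
qed

(* The left-hand side is the derivative of exp(-1/u)/u^n in the form produced by derivative_eq_intros. *)
lemma flat_derivative_identity:
  "(u::real) > 0 \<Longrightarrow> (E * ((0 * u + (0 - 1)) / (u * u)) * u ^ n - E * (real n * ((0 - 1) * u ^ (n - Suc 0))))
    / (u ^ n * u ^ n) = real n * (E / u ^ Suc n) - E / u ^ Suc (Suc n)"
  by (cases n) (simp_all add: field_simps)

lemma has_real_derivative_flat:
  "(flat c n has_real_derivative real n * flat c (Suc n) t - flat c (Suc (Suc n)) t) (at t)"
proof (cases t c rule: linorder_cases)
  case less
  have "((\<lambda>s. exp (- 1 / (c - s)) / (c - s) ^ n) has_real_derivative
      real n * flat c (Suc n) t - flat c (Suc (Suc n)) t) (at t)"
    apply (intro derivative_eq_intros)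
    using less apply simp_all
    using flat_derivative_identity[of "c - t" "exp (- (1 / (c - t)))" n] less by (simp add: flat_def)
  then show ?thesis
    by (rule has_field_derivative_transform_within_open[where S="{..<c}"]) (auto simp: flat_def less)
next
  case equal
  then show ?thesis using has_real_derivative_flat_at_center[of c n] by (simp add: flat_eq_0)
next
  case greater
  have "((\<lambda>s. 0) has_real_derivative 0) (at t)" by simp
  then have "(flat c n has_real_derivative 0) (at t)"
    by (rule has_field_derivative_transform_within_open[where S="{c<..}"])
      (use greater in \<open>auto simp: flat_def\<close>)
  then show ?thesis using greater by (simp add: flat_eq_0)
qed

definition excess_coeff :: "real \<Rightarrow> real \<Rightarrow> real \<Rightarrow> real \<Rightarrow> real \<Rightarrow> real" where
  "excess_coeff F0 F1 F2 u g =
     2 * F1 * (1 - 2 * u) / F0 - (2 * u\<^sup>2 + g * u ^ 4) * (F1\<^sup>2 / F0\<^sup>2 + 2 * F2 / F0)"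

(* The 2-jet of f o sigma in terms of that of f at sigma s: here sigma' = 1 + g u^2 and
   sigma'' = 2 g u - g, with u = so - s and g = flat so 4 s. *)
lemma energy_density_reparametrization:
  assumes "D 0 s = F0" "D 1 s = F1 * (1 + g * u\<^sup>2)"
    and "D 2 s = F2 * (1 + g * u\<^sup>2)\<^sup>2 + F1 * (2 * g * u - g)"
    and "D' 0 s' = F0" "D' 1 s' = F1" "D' 2 s' = F2" "F0 \<noteq> 0"
  shows "energy_density x x' D s = energy_density x x' D' s' + g * excess_coeff F0 F1 F2 u g"
  unfolding energy_density_def warped_scalar_def excess_coeff_def assms(1-6)
  using assms(7) by (simp add: field_simps power2_eq_square power4_eq_xxxx)

lemma eventually_pos_on_left_segment:
  fixes g :: "real \<Rightarrow> real"
  assumes "continuous_on {b..c} g" "b < c" "g c > 0"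
  shows "\<forall>\<^sub>F \<delta> in at_right 0. \<forall>s\<in>{c - \<delta>..c}. g s > 0"
proof -
  have "c \<in> {b..c}" using assms(2) by simp
  with assms(1,3) obtain d where "d > 0" and d: "\<forall>s\<in>{b..c}. dist s c < d \<longrightarrow> dist (g s) (g c) < g c"
    unfolding continuous_on_iff by blast
  have "\<forall>\<^sub>F \<delta> in at_right 0. \<delta> \<in> {0<..<min d (c - b)}"
    using \<open>d > 0\<close> assms(2) by (intro eventually_at_right_real) simp
  then show ?thesis
  proof (rule eventually_mono, intro ballI)
    fix \<delta> s assume "\<delta> \<in> {0<..<min d (c - b)}" "s \<in> {c - \<delta>..c}"
    then have "s \<in> {b..c}" "dist s c < d" by (auto simp: dist_real_def)
    with d have "dist (g s) (g c) < g c" by blast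
    then show "g s > 0" by (auto simp: dist_real_def)
  qed
qed

locale flat_reparametrization =
  fixes a so :: real and f :: "real \<Rightarrow> real" and Df :: "nat \<Rightarrow> real \<Rightarrow> real"
  assumes smooth_f: "smooth_ray a f Df"
    and f_pos: "\<forall>s\<ge>a. f s > 0"
    and a_less_so: "a < so"
begin

definition \<sigma> :: "real \<Rightarrow> real" where
  "\<sigma> s = s - flat so 0 s"

(* Since flat so 0 s <= so - s, sigma maps [b0, oo) into [2 b0 - so, oo) = [a, oo). *)
definition b0 :: real where
  "b0 = (a + so) / 2"

definition ft :: "real \<Rightarrow> real" where
  "ft s = Df 0 (\<sigma> s)"

definition ft' :: "real \<Rightarrow> real" where
  "ft' s = Df 1 (\<sigma> s) * (1 + flat so 2 s)"

definition ft'' :: "real \<Rightarrow> real" where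
  "ft'' s = Df 2 (\<sigma> s) * (1 + flat so 2 s)\<^sup>2 + Df 1 (\<sigma> s) * (2 * flat so 3 s - flat so 4 s)"

definition Dft_tail :: "nat \<Rightarrow> real \<Rightarrow> real" where
  "Dft_tail = (SOME D. D 0 = ft'' \<and> deriv_tower {b0..} D)"

definition Dft :: "nat \<Rightarrow> real \<Rightarrow> real" where
  "Dft = case_nat ft (case_nat ft' Dft_tail)"

definition excess :: "real \<Rightarrow> real" where
  "excess s = excess_coeff (Df 0 (\<sigma> s)) (Df 1 (\<sigma> s)) (Df 2 (\<sigma> s)) (so - s) (flat so 4 s)"

lemma Df_eq_f: "a \<le> t \<Longrightarrow> Df 0 t = f t"
  using smooth_f by (simp add: smooth_ray_def)

lemma has_real_derivative_Df:
  "a \<le> t \<Longrightarrow> (Df k has_real_derivative Df (Suc k) t) (at t within {a..})"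
  using smooth_f by (simp add: smooth_ray_def)

lemma b0_bounds: "a < b0" "b0 < so"
  using a_less_so by (simp_all add: b0_def)

lemma \<sigma>_eq_self: "so \<le> s \<Longrightarrow> \<sigma> s = s"
  by (simp add: \<sigma>_def flat_eq_0)

lemma \<sigma>_ge: "b0 \<le> s \<Longrightarrow> a \<le> \<sigma> s"
proof (cases "so \<le> s")
  case True
  then show ?thesis using \<sigma>_eq_self a_less_so by simp
next
  case False
  then have "flat so 0 s \<le> so - s" by (simp add: flat_0_le)
  moreover assume "b0 \<le> s"
  ultimately show ?thesis by (simp add: \<sigma>_def b0_def)
qed

lemma has_real_derivative_\<sigma>: "(\<sigma> has_real_derivative 1 + flat so 2 t) (at t)"
  unfolding \<sigma>_def[abs_def] using has_real_derivative_flat[of so 0 t]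
  by (auto intro!: derivative_eq_intros simp: numeral_2_eq_2)

lemma has_real_derivative_Df_\<sigma>:
  assumes "b0 \<le> t"
  shows "((\<lambda>s. Df k (\<sigma> s)) has_real_derivative Df (Suc k) (\<sigma> t) * (1 + flat so 2 t)) (at t within {b0..})"
proof -
  have "\<sigma> ` {b0..} \<subseteq> {a..}" using \<sigma>_ge by auto
  then have "(Df k has_real_derivative Df (Suc k) (\<sigma> t)) (at (\<sigma> t) within \<sigma> ` {b0..})"
    using has_real_derivative_Df \<sigma>_ge assms by (blast intro: has_field_derivative_subset)
  from DERIV_image_chain[OF this has_field_derivative_at_within[OF has_real_derivative_\<sigma>]]
  show ?thesis by (simp add: o_def)
qed

lemma smooth_within_ft'': "smooth_within {b0..} ft''"
proof -
  define B where "B = range (\<lambda>k s. Df k (\<sigma> s)) \<union> range (flat so)"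
  have Df_\<sigma>: "(\<lambda>s. Df k (\<sigma> s)) \<in> alg_gen B" and flat: "flat so n \<in> alg_gen B" for k n
    by (auto intro: alg_gen.base simp: B_def)
  have one_plus_flat: "(\<lambda>s. 1 + flat so 2 s) \<in> alg_gen B"
    by (rule alg_gen.add[OF alg_gen.const flat])
  have "\<exists>b'\<in>alg_gen B. \<forall>t\<in>{b0..}.
      ((\<lambda>s. Df k (\<sigma> s)) has_real_derivative b' t) (at t within {b0..})" for k
    using has_real_derivative_Df_\<sigma> alg_gen.mult[OF Df_\<sigma> one_plus_flat]
    by (intro bexI[of _ "\<lambda>t. Df (Suc k) (\<sigma> t) * (1 + flat so 2 t)"]) auto
  moreover have "\<exists>b'\<in>alg_gen B. \<forall>t\<in>{b0..}.
      (flat so n has_real_derivative b' t) (at t within {b0..})" for n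
    using has_real_derivative_flat alg_gen.diff[OF alg_gen.mult[OF alg_gen.const flat] flat]
    by (intro bexI[of _ "\<lambda>t. real n * flat so (Suc n) t - flat so (Suc (Suc n)) t"])
      (auto intro: has_field_derivative_at_within)
  ultimately have "\<forall>b\<in>B. \<exists>b'\<in>alg_gen B. \<forall>t\<in>{b0..}.
      (b has_real_derivative b' t) (at t within {b0..})"
    unfolding B_def by blast
  moreover have "ft'' \<in> alg_gen B"
    unfolding ft''_def[abs_def] power2_eq_square
    by (intro alg_gen.add alg_gen.mult alg_gen.diff Df_\<sigma> one_plus_flat flat alg_gen.const)
  ultimately show ?thesis
    by (blast intro: smooth_within_alg_gen)
qed

lemma Dft_tail: "Dft_tail 0 = ft''" "deriv_tower {b0..} Dft_tail"
  using someI_ex[of "\<lambda>D. D 0 = ft'' \<and> deriv_tower {b0..} D"] smooth_within_ft''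
  unfolding Dft_tail_def smooth_within_def by auto

lemma Dft_0_1_2: "Dft 0 = ft" "Dft 1 = ft'" "Dft 2 = ft''"
  by (simp_all add: Dft_def Dft_tail numeral_2_eq_2)

lemma deriv_tower_Dft: "deriv_tower {b0..} Dft"
  unfolding Dft_def
proof (intro deriv_tower_case_nat ballI)
  fix t assume "t \<in> {b0..}"
  then have Df_\<sigma>: "((\<lambda>s. Df k (\<sigma> s)) has_real_derivative Df (Suc k) (\<sigma> t) * (1 + flat so 2 t))
      (at t within {b0..})" for k
    by (simp add: has_real_derivative_Df_\<sigma>)
  have "(flat so 2 has_real_derivative 2 * flat so 3 t - flat so 4 t) (at t within {b0..})"
    using has_field_derivative_at_within[OF has_real_derivative_flat[of so 2 t]]
    by (simp add: eval_nat_numeral)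
  from DERIV_mult[OF Df_\<sigma>[of 1] DERIV_add[OF DERIV_const[of 1] this]]
  show "(ft' has_real_derivative Dft_tail 0 t) (at t within {b0..})"
    unfolding ft'_def[abs_def] Dft_tail ft''_def by (simp add: numeral_2_eq_2 power2_eq_square algebra_simps)
  from Df_\<sigma>[of 0]
  show "(ft has_real_derivative case_nat ft' Dft_tail 0 t) (at t within {b0..})"
    unfolding ft_def[abs_def] by (simp add: ft'_def)
qed (rule Dft_tail)

lemma smooth_ray_Dft: "b0 \<le> b \<Longrightarrow> smooth_ray b ft Dft"
  using deriv_tower_subset[OF deriv_tower_Dft]
  by (simp add: smooth_ray_iff_deriv_tower Dft_0_1_2)

lemma Dft_eq_Df: "so \<le> s \<Longrightarrow> k \<le> 2 \<Longrightarrow> Dft k s = Df k s"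
  by (auto simp: le_Suc_eq numeral_2_eq_2 Dft_0_1_2[unfolded numeral_2_eq_2 One_nat_def]
      ft_def ft'_def ft''_def \<sigma>_eq_self flat_eq_0)

lemma ft_pos: "b0 \<le> s \<Longrightarrow> 0 < ft s"
  using f_pos \<sigma>_ge Df_eq_f by (simp add: ft_def)

lemma ft_eq_f: "so \<le> s \<Longrightarrow> ft s = f s"
  using Dft_eq_Df[of s 0] Df_eq_f a_less_so by (simp add: Dft_0_1_2)

lemma energy_density_Dft_right:
  "so \<le> s \<Longrightarrow> energy_density x x' Dft s = energy_density x x' Df s"
  by (simp add: energy_density_def Dft_eq_Df)

lemma energy_density_Dft_left:
  assumes "b0 \<le> s" "s < so"
  shows "energy_density x x' Dft s = energy_density x x' Df (\<sigma> s) + flat so 4 s * excess s"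
  unfolding excess_def
proof (rule energy_density_reparametrization)
  have "flat so 2 s = flat so 4 s * (so - s)\<^sup>2" "flat so 3 s = flat so 4 s * (so - s)"
    using flat_mult_power[OF \<open>s < so\<close>, of 2 2] flat_mult_power[OF \<open>s < so\<close>, of 3 1] by simp_all
  then show "Dft 1 s = Df 1 (\<sigma> s) * (1 + flat so 4 s * (so - s)\<^sup>2)"
    and "Dft 2 s = Df 2 (\<sigma> s) * (1 + flat so 4 s * (so - s)\<^sup>2)\<^sup>2
      + Df 1 (\<sigma> s) * (2 * flat so 4 s * (so - s) - flat so 4 s)"
    by (simp_all add: Dft_def Dft_tail ft'_def ft''_def numeral_2_eq_2)
  show "Df 0 (\<sigma> s) \<noteq> 0"
    using ft_pos[OF \<open>b0 \<le> s\<close>] by (simp add: ft_def)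
qed (simp_all add: Dft_0_1_2 ft_def)

lemma continuous_on_Df_\<sigma>: "continuous_on {b0..} (\<lambda>s. Df k (\<sigma> s))"
  using has_real_derivative_Df_\<sigma>
  by (auto simp: continuous_on_eq_continuous_within intro: DERIV_continuous)

lemma continuous_on_excess: "continuous_on {b0..so} excess"
proof -
  have "continuous_on {b0..so} (\<lambda>s. Df k (\<sigma> s))" for k
    by (rule continuous_on_subset[OF continuous_on_Df_\<sigma>]) auto
  moreover have "continuous_on {b0..so} (flat so 4)"
    using has_real_derivative_flat by (intro continuous_at_imp_continuous_on) (blast intro: DERIV_isCont)
  moreover have "\<forall>s\<in>{b0..so}. Df 0 (\<sigma> s) \<noteq> 0"
    using ft_pos by (force simp: ft_def)
  ultimately show ?thesis
    unfolding excess_def[abs_def] excess_coeff_def by (intro continuous_intros) auto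
qed

lemma excess_at_so: "excess so = 2 * Df 1 so / f so"
  using a_less_so by (simp add: excess_def excess_coeff_def \<sigma>_eq_self flat_eq_0 Df_eq_f)

lemma eventually_b0_le: "\<forall>\<^sub>F \<delta> in at_right 0. b0 \<le> so - \<delta>"
  using eventually_at_right_real[of 0 "so - b0"] b0_bounds
  by (auto elim: eventually_mono)

lemma eventually_smooth_ray_Dft: "\<forall>\<^sub>F \<delta> in at_right 0. smooth_ray (so - \<delta>) ft Dft"
  using eventually_b0_le by (rule eventually_mono) (rule smooth_ray_Dft)

lemma eventually_ft_pos: "\<forall>\<^sub>F \<delta> in at_right 0. \<forall>s\<ge>so - \<delta>. 0 < ft s"
  using eventually_b0_le by (rule eventually_mono) (auto intro: ft_pos)

lemma eventually_energy_density_gt: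
  assumes \<mu>: "\<forall>s\<ge>a. \<tau> \<le> energy_density x x' Df s" and "0 < Df 1 so"
  shows "\<forall>\<^sub>F \<delta> in at_right 0. \<forall>s\<in>{so - \<delta>..<so}. \<tau> < energy_density x x' Dft s"
proof -
  have "0 < excess so"
    using excess_at_so assms(2) f_pos a_less_so by simp
  then have "\<forall>\<^sub>F \<delta> in at_right 0. \<forall>s\<in>{so - \<delta>..so}. 0 < excess s"
    by (rule eventually_pos_on_left_segment[OF continuous_on_excess b0_bounds(2)])
  with eventually_b0_le show ?thesis
  proof eventually_elim
    case (elim \<delta>)
    show ?case
    proof
      fix s assume s: "s \<in> {so - \<delta>..<so}"
      then have "\<tau> \<le> energy_density x x' Df (\<sigma> s)"
        using \<mu> \<sigma>_ge elim by simp
      moreover have "0 < flat so 4 s * excess s"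
        using flat_pos elim s by simp
      ultimately show "\<tau> < energy_density x x' Dft s"
        using energy_density_Dft_left elim s by simp
    qed
  qed
qed

lemma eventually_energy_density_ge:
  assumes "\<forall>s\<ge>a. \<tau> \<le> energy_density x x' Df s" and "0 < Df 1 so"
  shows "\<forall>\<^sub>F \<delta> in at_right 0. \<forall>s\<ge>so - \<delta>. \<tau> \<le> energy_density x x' Dft s"
  using eventually_energy_density_gt[OF assms]
proof eventually_elim
  case (elim \<delta>)
  show ?case
  proof (intro allI impI)
    fix s assume "so - \<delta> \<le> s"
    show "\<tau> \<le> energy_density x x' Dft s"
    proof (cases "s < so")
      case True
      with elim \<open>so - \<delta> \<le> s\<close> show ?thesis by (auto intro: less_imp_le)
    next
      case False
      then show ?thesis using assms(1) energy_density_Dft_right a_less_so by simp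
    qed
  qed
qed

lemma eventually_ft_gt: "c < f so \<Longrightarrow> \<forall>\<^sub>F \<delta> in at_right 0. c < ft (so - \<delta>)"
proof -
  assume "c < f so"
  have "continuous_on {b0..so} (\<lambda>s. ft s - c)"
    unfolding ft_def by (intro continuous_intros continuous_on_subset[OF continuous_on_Df_\<sigma>]) auto
  moreover have "ft so - c > 0"
    using \<open>c < f so\<close> by (simp add: ft_eq_f)
  ultimately have "\<forall>\<^sub>F \<delta> in at_right 0. \<forall>s\<in>{so - \<delta>..so}. ft s - c > 0"
    by (rule eventually_pos_on_left_segment[OF _ b0_bounds(2)])
  with eventually_at_right_less show ?thesis
    by eventually_elim simp
qed

lemma eventually_Dft_1_less: "0 < Df 2 so \<Longrightarrow> \<forall>\<^sub>F \<delta> in at_right 0. Dft 1 (so - \<delta>) < Df 1 so"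
proof -
  assume "0 < Df 2 so"
  have "(Dft 1 has_real_derivative Dft 2 so) (at so within {b0..})"
    using deriv_tower_Dft b0_bounds unfolding deriv_tower_def numeral_2_eq_2 by simp
  moreover have "Dft 2 so > 0" "Dft 1 so = Df 1 so"
    using \<open>0 < Df 2 so\<close> Dft_eq_Df by simp_all
  ultimately obtain d where "d > 0"
    and d: "\<forall>h>0. so - h \<in> {b0..} \<longrightarrow> h < d \<longrightarrow> Dft 1 (so - h) < Df 1 so"
    using has_real_derivative_pos_inc_left by metis
  have "\<forall>\<^sub>F \<delta> in at_right 0. \<delta> \<in> {0<..<min d (so - b0)}"
    using \<open>d > 0\<close> b0_bounds by (intro eventually_at_right_real) simp
  then show ?thesis
    by (rule eventually_mono) (use d in auto)
qed

end

theorem lemma4p5: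
  fixes a \<tau> so :: real
    and f x x' :: "real \<Rightarrow> real"
    and Df :: "nat \<Rightarrow> real \<Rightarrow> real"
  assumes "a \<ge> 0"
    and "smooth_ray a f Df"
    and "\<forall>s\<ge>a. f s > 0"
    and "C1_pos x x'"
    and "\<forall>s\<ge>a. energy_density x x' Df s \<ge> \<tau>"
    and "so > a"
    and "Df 1 so > 0"
  shows "(\<exists>\<delta>>0. \<exists>ft Dft. smooth_ray (so - \<delta>) ft Dft
            \<and> (\<forall>s\<ge>so - \<delta>. ft s > 0)
            \<and> (\<forall>s\<ge>so. ft s = f s)
            \<and> (\<forall>s\<ge>so - \<delta>. energy_density x x' Dft s \<ge> \<tau>)
            \<and> (\<forall>s\<in>{so - \<delta>..<so}. energy_density x x' Dft s > \<tau>))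
       \<and> (\<forall>c. f so > c \<and> c > 0 \<and> Df 2 so > 0 \<longrightarrow>
           (\<exists>\<delta>>0. \<exists>ft Dft. smooth_ray (so - \<delta>) ft Dft
            \<and> (\<forall>s\<ge>so - \<delta>. ft s > 0)
            \<and> (\<forall>s\<ge>so. ft s = f s)
            \<and> (\<forall>s\<ge>so - \<delta>. energy_density x x' Dft s \<ge> \<tau>)
            \<and> (\<forall>s\<in>{so - \<delta>..<so}. energy_density x x' Dft s > \<tau>)
            \<and> ft (so - \<delta>) > c
            \<and> Dft 1 (so - \<delta>) < Df 1 so))"
proof -
  interpret flat_reparametrization a so f Df
    using assms(2,3,6) by unfold_locales auto
  have witness: "\<exists>\<delta>>0. \<exists>g Dg. P \<delta> g Dg" if "\<forall>\<^sub>F \<delta> in at_right 0. P \<delta> ft Dft"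
    for P :: "real \<Rightarrow> (real \<Rightarrow> real) \<Rightarrow> (nat \<Rightarrow> real \<Rightarrow> real) \<Rightarrow> bool"
    using eventually_happens'[OF trivial_limit_at_right_real eventually_conj[OF eventually_at_right_less that]]
    by blast
  show ?thesis
    using assms(5,7)
    by (intro conjI allI impI witness eventually_conj eventually_smooth_ray_Dft eventually_ft_pos
        eventually_energy_density_ge eventually_energy_density_gt eventually_ft_gt eventually_Dft_1_less)
      (auto simp: ft_eq_f)
qed

end
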